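(* Let $\mathscr Q_n$ be a non-singular quadric in $\mathrm{PG}(n,2)$ of projective index $g\ge1$, let $0\le s<g$, let $\alpha_s$ be an $s$-dimensional subspace contained in $\mathscr Q_n$, and let $\Gamma_s$ be the graph constructed from $\alpha_s$ as described below. Then the maximum size of a clique in $\Gamma_s$ is $2^{g+1}-1$.
   Context: A non-singular quadric $\mathscr Q_n$ in $\mathrm{PG}(n,2)$ is the point set of a non-degenerate quadric; its projective index $g$ is the largest dimension of a projective subspace contained in $\mathscr Q_n$. The point-graph $\Gamma$ has vertex set the points of $\mathscr Q_n$, two distinct points adjacent iff the line joining them is contained in $\mathscr Q_n$. A point $X$ of $\mathscr Q_n$ has type (i) if $X\in\alpha_s$; type (ii) if $X\notin\alpha_s$ and $\langle\alpha_s,X\rangle\subseteq\mathscr Q_n$; type (iii) otherwise. Let $\mathcal X_s$ be the type (ii) points and $\mathcal Y_s$ the points of type (i) or (iii). The graph $\Gamma_s$ has the same vertex set as $\Gamma$ and the same edges, except that for each vertex $R\in\mathcal Y_s$ having exactly $\frac12|\mathcal X_s|$ neighbours in $\mathcal X_s$ (in $\Gamma$), those edges are deleted and $R$ is joined instead to the other $\frac12|\mathcal X_s|$ vertices of $\mathcal X_s$. *)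

theory Defs
  imports Main "HOL-Library.Z2"
begin

text \<open>Vectors of GF(2)^(n+1): functions nat => bit vanishing outside {0..n}.
  Points of PG(n,2): nonzero such vectors.\<close>

definition vecs :: "nat \<Rightarrow> (nat \<Rightarrow> bit) set" where
  "vecs n = {v. \<forall>i>n. v i = 0}"

definition pts :: "nat \<Rightarrow> (nat \<Rightarrow> bit) set" where
  "pts n = {v \<in> vecs n. v \<noteq> (\<lambda>_. 0)}"

definition vadd :: "(nat \<Rightarrow> bit) \<Rightarrow> (nat \<Rightarrow> bit) \<Rightarrow> (nat \<Rightarrow> bit)" where
  "vadd u w = (\<lambda>i. u i + w i)"

definition qform :: "nat \<Rightarrow> (nat \<Rightarrow> nat \<Rightarrow> bit) \<Rightarrow> (nat \<Rightarrow> bit) \<Rightarrow> bit" where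
  "qform n a v = (\<Sum>i\<le>n. \<Sum>j\<in>{i..n}. a i j * v i * v j)"

definition polar :: "nat \<Rightarrow> (nat \<Rightarrow> nat \<Rightarrow> bit) \<Rightarrow> (nat \<Rightarrow> bit) \<Rightarrow> (nat \<Rightarrow> bit) \<Rightarrow> bit" where
  "polar n a u w = qform n a (vadd u w) + qform n a u + qform n a w"

definition nonsingular :: "nat \<Rightarrow> (nat \<Rightarrow> nat \<Rightarrow> bit) \<Rightarrow> bool" where
  "nonsingular n a \<longleftrightarrow>
     \<not> (\<exists>v\<in>pts n. qform n a v = 0 \<and> (\<forall>w\<in>vecs n. polar n a v w = 0))"

definition quadric :: "nat \<Rightarrow> (nat \<Rightarrow> nat \<Rightarrow> bit) \<Rightarrow> (nat \<Rightarrow> bit) set" where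
  "quadric n a = {v \<in> pts n. qform n a v = 0}"

text \<open>Projective subspace of PG(n,2) of (projective) dimension k: the nonzero
  vectors of a (k+1)-dimensional linear subspace; over GF(2) this is a set of
  points closed under sums of distinct elements, of size 2^(k+1)-1.\<close>

definition proj_subspace :: "nat \<Rightarrow> (nat \<Rightarrow> bit) set \<Rightarrow> nat \<Rightarrow> bool" where
  "proj_subspace n S k \<longleftrightarrow> S \<subseteq> pts n \<and>
     (\<forall>x\<in>S. \<forall>y\<in>S. x \<noteq> y \<longrightarrow> vadd x y \<in> S) \<and> card S = 2^(k+1) - 1"

definition proj_index :: "nat \<Rightarrow> (nat \<Rightarrow> nat \<Rightarrow> bit) \<Rightarrow> nat" where
  "proj_index n a = (GREATEST k. \<exists>S. proj_subspace n S k \<and> S \<subseteq> quadric n a)"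

text \<open>Adjacency in the point graph Gamma: distinct points whose joining line
  {P, R, P+R} lies on the quadric.\<close>

definition adj :: "nat \<Rightarrow> (nat \<Rightarrow> nat \<Rightarrow> bit) \<Rightarrow> (nat \<Rightarrow> bit) \<Rightarrow> (nat \<Rightarrow> bit) \<Rightarrow> bool" where
  "adj n a P R \<longleftrightarrow> P \<in> quadric n a \<and> R \<in> quadric n a \<and> P \<noteq> R \<and>
     {P, R, vadd P R} \<subseteq> quadric n a"

definition span_pt :: "(nat \<Rightarrow> bit) set \<Rightarrow> (nat \<Rightarrow> bit) \<Rightarrow> (nat \<Rightarrow> bit) set" where
  "span_pt A X = A \<union> {X} \<union> (\<lambda>b. vadd b X) ` A"

text \<open>Type (ii) points X_s, and Y_s = points of type (i) or (iii).\<close>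

definition Xs :: "nat \<Rightarrow> (nat \<Rightarrow> nat \<Rightarrow> bit) \<Rightarrow> (nat \<Rightarrow> bit) set \<Rightarrow> (nat \<Rightarrow> bit) set" where
  "Xs n a A = {X \<in> quadric n a. X \<notin> A \<and> span_pt A X \<subseteq> quadric n a}"

definition Ys :: "nat \<Rightarrow> (nat \<Rightarrow> nat \<Rightarrow> bit) \<Rightarrow> (nat \<Rightarrow> bit) set \<Rightarrow> (nat \<Rightarrow> bit) set" where
  "Ys n a A = quadric n a - Xs n a A"

definition switched :: "nat \<Rightarrow> (nat \<Rightarrow> nat \<Rightarrow> bit) \<Rightarrow> (nat \<Rightarrow> bit) set \<Rightarrow> (nat \<Rightarrow> bit) \<Rightarrow> bool" where
  "switched n a A R \<longleftrightarrow> R \<in> Ys n a A \<and>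
     2 * card {X \<in> Xs n a A. adj n a R X} = card (Xs n a A)"

definition adj_s :: "nat \<Rightarrow> (nat \<Rightarrow> nat \<Rightarrow> bit) \<Rightarrow> (nat \<Rightarrow> bit) set \<Rightarrow> (nat \<Rightarrow> bit) \<Rightarrow> (nat \<Rightarrow> bit) \<Rightarrow> bool" where
  "adj_s n a A P R \<longleftrightarrow> P \<in> quadric n a \<and> R \<in> quadric n a \<and> P \<noteq> R \<and>
     (if (switched n a A P \<and> R \<in> Xs n a A) \<or> (switched n a A R \<and> P \<in> Xs n a A)
      then \<not> adj n a P R else adj n a P R)"

definition clique_s :: "nat \<Rightarrow> (nat \<Rightarrow> nat \<Rightarrow> bit) \<Rightarrow> (nat \<Rightarrow> bit) set \<Rightarrow> (nat \<Rightarrow> bit) set \<Rightarrow> bool" where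
  "clique_s n a A C \<longleftrightarrow> C \<subseteq> quadric n a \<and>
     (\<forall>P\<in>C. \<forall>R\<in>C. P \<noteq> R \<longrightarrow> adj_s n a A P R)"

end

(*
  The polar form B of Q is alternating, so two points of the quadric are adjacent in Gamma
  iff they are B-orthogonal; a clique of Gamma spans a totally singular subspace and hence has
  at most 2^(g+1) - 1 points.  A totally singular subspace of dimension g through alpha_s is
  orthogonal to alpha_s, so it contains no point of type (iii) and is a clique of Gamma_s too.

  Conversely, the switched vertices are exactly the type (iii) points, so in a clique C of
  Gamma_s two points are non-orthogonal iff one has type (ii) and the other type (iii).  By the
  Fredholm alternative over GF(2), either some b in alpha_s satisfies B(x, b) = 1 for all type
  (iii) points x of C, or some r in the span of those points is orthogonal to alpha_s and has
  B(r, X) = 1 for all type (ii) points X of C.  Translating the type (ii) points of C by b,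
  respectively the type (iii) points by r, maps C injectively onto a clique of Gamma.
*)

theory Submission
  imports Defs "HOL-Library.Function_Algebras"
begin

(* Keep the field operations of bit instead of rewriting them to XOR and AND. *)
declare add_bit_eq_xor [simp del] mult_bit_eq_and [simp del]

lemma bit_add_self [simp]: "(x::bit) + x = 0"
  by (simp add: add_bit_eq_xor)

lemma UNIV_bit: "(UNIV :: bit set) = {0, 1}"
  using bit.exhaust by blast

lemma bit_fun_add_self [simp]: "(x::'a \<Rightarrow> bit) + x = 0"
  by (rule ext) simp

lemma bit_fun_add_cancel [simp]:
  fixes x y :: "'a \<Rightarrow> bit"
  shows "x + (x + y) = y" "y + x + x = y"
  by (simp_all only: add.assoc[symmetric] bit_fun_add_self add_0_left)
     (simp only: add.assoc bit_fun_add_self add_0_right)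

lemma bit_fun_add_eq_iff: "(x::'a \<Rightarrow> bit) + y = z \<longleftrightarrow> x = z + y"
  by (metis bit_fun_add_cancel(2))

lemma bit_fun_add_eq_0_iff: "(x::'a \<Rightarrow> bit) + y = 0 \<longleftrightarrow> x = y"
  by (simp add: bit_fun_add_eq_iff)

lemma vadd_eq_plus [simp]: "vadd = (+)"
  by (simp add: fun_eq_iff vadd_def)

lemma zero_in_vecs [simp]: "0 \<in> vecs n"
  by (simp add: vecs_def)

lemma add_in_vecs [intro]: "u \<in> vecs n \<Longrightarrow> w \<in> vecs n \<Longrightarrow> u + w \<in> vecs n"
  by (simp add: vecs_def)

lemma finite_vecs: "finite (vecs n)"
proof -
  have "finite (UNIV :: bit set)"
    by (simp add: UNIV_bit)
  then have "finite {v :: nat \<Rightarrow> bit. \<forall>i. (i \<in> {..n} \<longrightarrow> v i \<in> UNIV) \<and> (i \<notin> {..n} \<longrightarrow> v i = 0)}"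
    by (intro finite_set_of_finite_funs) auto
  then show ?thesis
    by (simp add: vecs_def not_le)
qed

lemma quadric_iff: "v \<in> quadric n a \<longleftrightarrow> v \<in> vecs n \<and> v \<noteq> 0 \<and> qform n a v = 0"
  by (auto simp: quadric_def pts_def zero_fun_def)

lemma finite_quadric_subset: "S \<subseteq> quadric n a \<Longrightarrow> finite S"
  by (rule finite_subset[OF _ finite_vecs]) (auto simp: quadric_iff)

lemma qform_add_expand:
  "qform n a (u + w) =
     qform n a u + qform n a w + (\<Sum>i\<le>n. \<Sum>j\<in>{i..n}. a i j * (u i * w j + w i * u j))"
proof -
  have "a i j * (u + w) i * (u + w) j =
      a i j * u i * u j + a i j * w i * w j + a i j * (u i * w j + w i * u j)" for i j
    by (simp add: algebra_simps)
  then show ?thesis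
    by (simp add: qform_def sum.distrib)
qed

lemma polar_altdef: "polar n a u w = (\<Sum>i\<le>n. \<Sum>j\<in>{i..n}. a i j * (u i * w j + w i * u j))"
  by (simp add: polar_def qform_add_expand algebra_simps)

lemma qform_add: "qform n a (u + w) = qform n a u + qform n a w + polar n a u w"
  by (simp add: polar_altdef qform_add_expand)

lemma polar_commute: "polar n a u w = polar n a w u"
  by (simp add: polar_altdef algebra_simps)

lemma polar_self [simp]: "polar n a u u = 0"
  by (simp add: polar_altdef)

lemma polar_add_left: "polar n a (u + v) w = polar n a u w + polar n a v w"
  by (simp add: polar_altdef algebra_simps sum.distrib)

lemma polar_add_right: "polar n a w (u + v) = polar n a w u + polar n a w v"
  by (simp add: polar_altdef algebra_simps sum.distrib)

lemma polar_zero [simp]: "polar n a 0 w = 0" "polar n a w 0 = 0"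
  by (simp_all add: polar_altdef)

lemma qform_zero [simp]: "qform n a 0 = 0"
  by (simp add: qform_def)

(* Over GF(2), additive subgroups are exactly the linear subspaces. *)
definition gf2_subspace :: "('a \<Rightarrow> bit) set \<Rightarrow> bool" where
  "gf2_subspace S \<longleftrightarrow> 0 \<in> S \<and> (\<forall>x\<in>S. \<forall>y\<in>S. x + y \<in> S)"

lemma gf2_subspace_kernel:
  assumes "gf2_subspace S" and "\<forall>x\<in>S. \<forall>y\<in>S. \<phi> (x + y) = \<phi> x + \<phi> y"
  shows "gf2_subspace {x\<in>S. \<phi> x = (0::bit)}"
proof -
  have "\<phi> 0 = 0"
    using assms bit_add_self[of "\<phi> 0"] unfolding gf2_subspace_def by (metis add_0)
  then show ?thesis
    using assms unfolding gf2_subspace_def by simp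
qed

lemma gf2_subspace_translate_Un:
  assumes "gf2_subspace S"
  shows "gf2_subspace (S \<union> (+) x ` S)"
  unfolding gf2_subspace_def
proof (intro conjI ballI)
  show "0 \<in> S \<union> (+) x ` S"
    using assms by (simp add: gf2_subspace_def)
next
  have closed: "u + w \<in> S" if "u \<in> S" "w \<in> S" for u w
    using assms that by (simp add: gf2_subspace_def)
  fix u w assume "u \<in> S \<union> (+) x ` S" "w \<in> S \<union> (+) x ` S"
  then consider "u \<in> S" "w \<in> S" | u' where "u' \<in> S" "u = x + u'" "w \<in> S"
    | w' where "u \<in> S" "w' \<in> S" "w = x + w'" | u' w' where "u' \<in> S" "w' \<in> S" "u = x + u'" "w = x + w'"
    by blast
  then show "u + w \<in> S \<union> (+) x ` S"
  proof cases
    case (2 u')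
    then show ?thesis using closed[of u' w] by (simp add: add.assoc)
  next
    case (3 w')
    then show ?thesis using closed[of u w'] by (simp add: add.left_commute)
  next
    case (4 u' w')
    then have "u + w = u' + w'" by (simp add: add.left_commute add.assoc)
    then show ?thesis using 4 closed by simp
  qed (use closed in simp)
qed

lemma card_translate_Un:
  assumes "finite S" "gf2_subspace S" "x \<notin> S"
  shows "card (S \<union> (+) x ` S) = 2 * card S"
proof -
  have "S \<inter> (+) x ` S = {}"
  proof (rule ccontr)
    assume "S \<inter> (+) x ` S \<noteq> {}"
    then obtain s s' where "s \<in> S" "s' \<in> S" "x + s = s'" by auto
    then have "x = s' + s" by (simp add: bit_fun_add_eq_iff)
    with \<open>s \<in> S\<close> \<open>s' \<in> S\<close> assms(2,3) show False by (simp add: gf2_subspace_def)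
  qed
  moreover have "card ((+) x ` S) = card S"
    by (simp add: card_image)
  ultimately show ?thesis
    using assms(1) by (simp add: card_Un_disjoint)
qed

lemma card_gf2_subspace_eq_double_kernel:
  assumes "finite S" "gf2_subspace S" "\<forall>x\<in>S. \<forall>y\<in>S. \<phi> (x + y) = \<phi> x + \<phi> y"
    and "m \<in> S" "\<phi> m = 1"
  shows "card S = 2 * card {x\<in>S. \<phi> x = (0::bit)}"
proof -
  define K where "K = {x\<in>S. \<phi> x = 0}"
  have "S = K \<union> (+) m ` K"
  proof (intro equalityI subsetI)
    fix x assume "x \<in> S"
    show "x \<in> K \<union> (+) m ` K"
    proof (cases "\<phi> x = 0")
      case False
      then have "m + x \<in> K"
        using assms \<open>x \<in> S\<close> by (simp add: K_def gf2_subspace_def)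
      then show ?thesis by (auto intro: image_eqI[where x = "m + x"])
    qed (use \<open>x \<in> S\<close> K_def in simp)
  next
    fix x assume "x \<in> K \<union> (+) m ` K"
    then show "x \<in> S"
      using assms by (auto simp: K_def gf2_subspace_def)
  qed
  moreover have "m \<notin> K"
    using assms(5) by (simp add: K_def)
  moreover have "gf2_subspace K"
    unfolding K_def using assms(2,3) by (rule gf2_subspace_kernel)
  ultimately show ?thesis
    using card_translate_Un[of K m] assms(1) by (metis K_def finite_Un)
qed

lemma card_gf2_subspace_power_of_two:
  fixes S :: "('a \<Rightarrow> bit) set"
  assumes "finite S" "gf2_subspace S"
  shows "\<exists>k. card S = 2 ^ k"
  using assms
proof (induct "card S" arbitrary: S rule: less_induct)
  case less
  show ?case
  proof (cases "S = {0}")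
    case True
    then show ?thesis by (intro exI[of _ 0]) simp
  next
    case False
    with less.prems obtain m where "m \<in> S" "m \<noteq> 0"
      unfolding gf2_subspace_def by blast
    then obtain i where m: "m \<in> S" "m i = 1"
      by (auto simp: fun_eq_iff)
    define K where "K = {x\<in>S. x i = 0}"
    have double: "card S = 2 * card K"
      unfolding K_def using card_gf2_subspace_eq_double_kernel[of S "\<lambda>x. x i" m] less.prems m by simp
    have "gf2_subspace K"
      unfolding K_def using less.prems(2) by (rule gf2_subspace_kernel) simp
    moreover have "card K < card S"
    proof -
      have "0 \<in> K" using less.prems(2) by (simp add: K_def gf2_subspace_def)
      then have "card K > 0" using less.prems(1) by (auto simp: K_def card_gt_0_iff)
      with double show ?thesis by simp
    qed
    ultimately obtain k where "card K = 2 ^ k"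
      using less.hyps[of K] less.prems(1) by (auto simp: K_def)
    with double show ?thesis by (intro exI[of _ "Suc k"]) simp
  qed
qed

definition totally_singular :: "nat \<Rightarrow> (nat \<Rightarrow> nat \<Rightarrow> bit) \<Rightarrow> (nat \<Rightarrow> bit) set \<Rightarrow> bool" where
  "totally_singular n a D \<longleftrightarrow> D \<subseteq> vecs n \<and> (\<forall>x\<in>D. qform n a x = 0) \<and>
     (\<forall>x\<in>D. \<forall>y\<in>D. polar n a x y = 0)"

definition totally_singular_subspace :: "nat \<Rightarrow> (nat \<Rightarrow> nat \<Rightarrow> bit) \<Rightarrow> (nat \<Rightarrow> bit) set \<Rightarrow> bool" where
  "totally_singular_subspace n a S \<longleftrightarrow> gf2_subspace S \<and> totally_singular n a S"

lemma totally_singular_subspaceI: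
  assumes "gf2_subspace S" "S \<subseteq> vecs n" "\<forall>x\<in>S. qform n a x = 0"
  shows "totally_singular_subspace n a S"
proof -
  have "polar n a x y = 0" if "x \<in> S" "y \<in> S" for x y
    using assms that qform_add[of n a x y] by (simp add: gf2_subspace_def)
  then show ?thesis
    using assms by (simp add: totally_singular_subspace_def totally_singular_def)
qed

lemma totally_singular_subspace_finite: "totally_singular_subspace n a S \<Longrightarrow> finite S"
  using finite_vecs finite_subset
  unfolding totally_singular_subspace_def totally_singular_def by blast

lemma totally_singular_subspace_translate_Un:
  assumes S: "totally_singular_subspace n a S"
    and x: "x \<in> vecs n" "qform n a x = 0" "\<forall>s\<in>S. polar n a s x = 0"
  shows "totally_singular_subspace n a (S \<union> (+) x ` S)"
proof (rule totally_singular_subspaceI)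
  show "gf2_subspace (S \<union> (+) x ` S)"
    using S gf2_subspace_translate_Un by (auto simp: totally_singular_subspace_def)
  show "S \<union> (+) x ` S \<subseteq> vecs n" "\<forall>y\<in>S \<union> (+) x ` S. qform n a y = 0"
    using S x by (auto simp: totally_singular_subspace_def totally_singular_def qform_add polar_commute)
qed

lemma translate_Un_self: "0 \<in> S \<Longrightarrow> insert (x::'a::monoid_add) S \<subseteq> S \<union> (+) x ` S"
  using image_eqI[of x "(+) x" 0 S] by auto

lemma totally_singular_span:
  assumes "totally_singular n a D"
  shows "\<exists>S. totally_singular_subspace n a S \<and> D \<subseteq> S \<and>
    (\<forall>y. (\<forall>d\<in>D. polar n a d y = 0) \<longrightarrow> (\<forall>s\<in>S. polar n a s y = 0))"
proof -
  have "finite D"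
    using assms finite_vecs finite_subset by (auto simp: totally_singular_def)
  then show ?thesis
    using assms
  proof (induction D rule: finite_induct)
    case empty
    have "totally_singular_subspace n a {0}"
      by (rule totally_singular_subspaceI) (auto simp: gf2_subspace_def)
    then show ?case by auto
  next
    case (insert x D)
    then obtain S where S: "totally_singular_subspace n a S" "D \<subseteq> S"
      "\<forall>y. (\<forall>d\<in>D. polar n a d y = 0) \<longrightarrow> (\<forall>s\<in>S. polar n a s y = 0)"
      by (auto simp: totally_singular_def)
    have x: "x \<in> vecs n" "qform n a x = 0" "\<forall>s\<in>S. polar n a s x = 0"
      using insert.prems S(3) by (auto simp: totally_singular_def)
    have "0 \<in> S"
      using S(1) by (simp add: totally_singular_subspace_def gf2_subspace_def)
    then have "insert x D \<subseteq> S \<union> (+) x ` S"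
      using S(2) translate_Un_self by blast
    moreover have "\<forall>s\<in>S \<union> (+) x ` S. polar n a s y = 0" if "\<forall>d\<in>insert x D. polar n a d y = 0" for y
      using S(3) that by (auto simp: polar_add_left)
    ultimately show ?case
      using totally_singular_subspace_translate_Un[OF S(1) x] by blast
  qed
qed

lemma totally_singular_subspace_exchange:
  assumes M: "totally_singular_subspace n a M"
    and x: "x \<in> vecs n" "qform n a x = 0" "x \<notin> M"
  shows "\<exists>M'. totally_singular_subspace n a M' \<and> insert x {s\<in>M. polar n a s x = 0} \<subseteq> M' \<and>
    card M \<le> card M'"
proof -
  \<comment> \<open>The hyperplane of M orthogonal to x has at least half the size of M; adding x doubles it.\<close>
  define M0 where "M0 = {s\<in>M. polar n a s x = 0}"
  have sub: "M0 \<subseteq> M" and fin: "finite M"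
    using M totally_singular_subspace_finite by (auto simp: M0_def)
  have additive: "\<forall>s\<in>M. \<forall>t\<in>M. polar n a (s + t) x = polar n a s x + polar n a t x"
    by (simp add: polar_add_left)
  have M0_subspace: "gf2_subspace M0"
    unfolding M0_def using M additive
    by (intro gf2_subspace_kernel) (auto simp: totally_singular_subspace_def)
  then have M0: "totally_singular_subspace n a M0"
    using M sub by (intro totally_singular_subspaceI)
      (auto simp: totally_singular_subspace_def totally_singular_def)
  have "card M \<le> 2 * card M0"
  proof (cases "\<exists>m\<in>M. polar n a m x = 1")
    case True
    then show ?thesis
      using card_gf2_subspace_eq_double_kernel[OF fin _ additive] M
      by (auto simp: M0_def totally_singular_subspace_def)
  next
    case False
    then have "M0 = M" by (auto simp: M0_def)
    then show ?thesis by simp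
  qed
  also have "\<dots> = card (M0 \<union> (+) x ` M0)"
    using sub x(3) by (intro card_translate_Un[symmetric] finite_subset[OF sub fin] M0_subspace) blast
  finally have "card M \<le> card (M0 \<union> (+) x ` M0)" .
  moreover have "insert x M0 \<subseteq> M0 \<union> (+) x ` M0"
    using M0_subspace by (intro translate_Un_self) (simp add: gf2_subspace_def)
  moreover have "totally_singular_subspace n a (M0 \<union> (+) x ` M0)"
    using x by (intro totally_singular_subspace_translate_Un[OF M0]) (auto simp: M0_def)
  ultimately show ?thesis
    unfolding M0_def by blast
qed

lemma totally_singular_subspace_extend:
  assumes M: "totally_singular_subspace n a M" and F: "totally_singular n a F"
  shows "\<exists>M'. totally_singular_subspace n a M' \<and> F \<subseteq> M' \<and> card M \<le> card M'"
proof -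
  have "finite F"
    using F finite_vecs finite_subset by (auto simp: totally_singular_def)
  then show ?thesis
    using F
  proof (induction F rule: finite_induct)
    case empty
    then show ?case using M by blast
  next
    case (insert x F)
    then obtain M1 where M1: "totally_singular_subspace n a M1" "F \<subseteq> M1" "card M \<le> card M1"
      by (auto simp: totally_singular_def)
    show ?case
    proof (cases "x \<in> M1")
      case True
      then show ?thesis using M1 by blast
    next
      case False
      moreover have "x \<in> vecs n" "qform n a x = 0" "F \<subseteq> {s\<in>M1. polar n a s x = 0}"
        using insert.prems M1(2) by (auto simp: totally_singular_def)
      ultimately show ?thesis
        using totally_singular_subspace_exchange[OF M1(1)] M1(3) by (meson insert_subset le_trans subset_trans)
    qed
  qed
qed

lemma proj_subspace_dim_less: "proj_subspace n S k \<Longrightarrow> k < card (vecs n)"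
proof -
  assume S: "proj_subspace n S k"
  then have "card S \<le> card (vecs n)"
    by (intro card_mono[OF finite_vecs]) (auto simp: proj_subspace_def pts_def)
  moreover have "Suc k < 2 ^ Suc k"
    by (rule less_exp)
  ultimately show ?thesis
    using S by (simp add: proj_subspace_def)
qed

lemma le_proj_index: "proj_subspace n S k \<Longrightarrow> S \<subseteq> quadric n a \<Longrightarrow> k \<le> proj_index n a"
  unfolding proj_index_def
  by (rule Greatest_le_nat[where b = "card (vecs n)"]) (auto dest: proj_subspace_dim_less)

lemma proj_index_attained:
  assumes "proj_subspace n S k" "S \<subseteq> quadric n a"
  obtains M where "proj_subspace n M (proj_index n a)" "M \<subseteq> quadric n a"
  using GreatestI_nat[where P = "\<lambda>k. \<exists>S. proj_subspace n S k \<and> S \<subseteq> quadric n a"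
      and b = "card (vecs n)"] assms
  unfolding proj_index_def by (fastforce dest: proj_subspace_dim_less)

lemma proj_subspace_insert_zero:
  assumes "proj_subspace n S k" "S \<subseteq> quadric n a"
  shows "totally_singular_subspace n a (insert 0 S)" "card (insert 0 S) = 2 ^ (k + 1)"
proof -
  have "x + y \<in> insert 0 S" if "x \<in> insert 0 S" "y \<in> insert 0 S" for x y
    using that assms(1) unfolding proj_subspace_def by (cases "x = y") auto
  then show "totally_singular_subspace n a (insert 0 S)"
    using assms(2) by (intro totally_singular_subspaceI) (auto simp: gf2_subspace_def quadric_iff)
  have "0 \<notin> S" "finite S"
    using assms(2) finite_quadric_subset by (auto simp: quadric_iff)
  then show "card (insert 0 S) = 2 ^ (k + 1)"
    using assms(1) by (simp add: proj_subspace_def)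
qed

lemma card_totally_singular_subspace_le:
  assumes S: "totally_singular_subspace n a S"
  shows "card S \<le> 2 ^ (proj_index n a + 1)"
proof -
  have fin: "finite S" and "0 \<in> S"
    using S totally_singular_subspace_finite
    by (auto simp: totally_singular_subspace_def gf2_subspace_def)
  obtain k where k: "card S = 2 ^ k"
    using card_gf2_subspace_power_of_two[OF fin] S by (auto simp: totally_singular_subspace_def)
  show ?thesis
  proof (cases k)
    case (Suc m)
    have "proj_subspace n (S - {0}) m"
      unfolding proj_subspace_def
      using S k Suc fin \<open>0 \<in> S\<close>
      by (auto simp: totally_singular_subspace_def totally_singular_def gf2_subspace_def
          pts_def zero_fun_def[symmetric] bit_fun_add_eq_0_iff)
    moreover have "S - {0} \<subseteq> quadric n a"
      using S by (auto simp: totally_singular_subspace_def totally_singular_def quadric_iff)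
    ultimately have "m \<le> proj_index n a"
      by (rule le_proj_index)
    then show ?thesis
      using k Suc by (simp add: power_increasing)
  qed (use k in simp)
qed

lemma card_totally_singular_le:
  assumes "D \<subseteq> quadric n a" "\<forall>x\<in>D. \<forall>y\<in>D. polar n a x y = 0"
  shows "card D \<le> 2 ^ (proj_index n a + 1) - 1"
proof -
  have "totally_singular n a D"
    using assms by (auto simp: totally_singular_def quadric_iff)
  then obtain S where S: "totally_singular_subspace n a S" "D \<subseteq> S"
    using totally_singular_span by blast
  then have "D \<subseteq> S - {0}"
    using assms(1) by (auto simp: quadric_iff)
  then have "card D \<le> card (S - {0})"
    using S(1) totally_singular_subspace_finite by (intro card_mono) auto
  also have "\<dots> = card S - 1"
    using S(1) by (simp add: totally_singular_subspace_def gf2_subspace_def)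
  finally show ?thesis
    using card_totally_singular_subspace_le[OF S(1)] by linarith
qed

lemma card_le_by_partial_translation:
  assumes C: "C \<subseteq> quadric n a" and T: "T \<subseteq> C"
    and v: "v \<in> vecs n" "qform n a v = 0" "\<forall>x\<in>T. polar n a v x = 0"
    and cross: "\<forall>x\<in>T. \<forall>y\<in>C - T. polar n a x y = polar n a v y"
    and orth_T: "\<forall>x\<in>T. \<forall>y\<in>T. polar n a x y = 0"
    and orth_rest: "\<forall>x\<in>C - T. \<forall>y\<in>C - T. polar n a x y = 0"
    and no_collision: "\<forall>x\<in>T. x \<noteq> v \<and> x + v \<notin> C - T"
  shows "card C \<le> 2 ^ (proj_index n a + 1) - 1"
proof -
  define f where "f x = (if x \<in> T then x + v else x)" for x
  have "inj_on f C"
  proof (rule inj_onI)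
    fix x y assume "x \<in> C" "y \<in> C" "f x = f y"
    then show "x = y"
      using no_collision unfolding f_def
      by (cases "x \<in> T"; cases "y \<in> T") (auto simp: bit_fun_add_eq_iff)
  qed
  moreover have "f ` C \<subseteq> quadric n a"
  proof
    fix y assume "y \<in> f ` C"
    then obtain x where x: "x \<in> C" "y = f x" by blast
    show "y \<in> quadric n a"
    proof (cases "x \<in> T")
      case True
      have "x \<in> quadric n a"
        using True T C by blast
      moreover have "polar n a x v = 0"
        using v(3) True by (metis polar_commute)
      ultimately have "x + v \<in> quadric n a"
        using v(1,2) no_collision True by (simp add: quadric_iff qform_add bit_fun_add_eq_0_iff add_in_vecs)
      then show ?thesis
        using True x by (simp add: f_def)
    qed (use x C f_def in auto)
  qed
  moreover have "polar n a (f x) (f y) = 0" if "x \<in> C" "y \<in> C" for x y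
  proof -
    have "polar n a z v = 0" if "z \<in> T" for z
      using v(3) that by (metis polar_commute)
    moreover have "polar n a z w = polar n a v z" if "z \<in> C - T" "w \<in> T" for z w
      using cross that by (metis polar_commute)
    ultimately show ?thesis
      using that v(3) cross orth_T orth_rest
      by (cases "x \<in> T"; cases "y \<in> T") (auto simp: f_def polar_add_left polar_add_right polar_commute[of n a _ v])
  qed
  ultimately show ?thesis
    using card_totally_singular_le[of "f ` C" n a] by (auto simp: card_image)
qed

lemma polar_solution_extend:
  assumes Z: "gf2_subspace Z" and a1: "a1 \<in> Z" "polar n a R a1 = 1"
    and \<psi>: "\<forall>x y. \<psi> (x + y) = \<psi> x + \<psi> y"
    and b: "b \<in> Z" "\<forall>x\<in>L. polar n a (g x) b = \<psi> (g x)"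
    and g: "\<And>x. g x = (if polar n a x a1 = 1 then x + R else x)"
  shows "\<exists>b'\<in>Z. \<forall>x\<in>insert R L. polar n a x b' = \<psi> x"
proof -
  define c where "c = \<psi> R + polar n a R b"
  define b' where "b' = (if c = 1 then b + a1 else b)"
  have "b' \<in> Z"
    using b(1) a1(1) Z by (simp add: b'_def gf2_subspace_def)
  moreover have b': "polar n a x b' = polar n a x b + c * polar n a x a1" for x
    by (cases c) (simp_all add: b'_def polar_add_right)
  have "polar n a x b' = \<psi> x" if "x \<in> L" for x
  proof (cases "polar n a x a1 = 1")
    case True
    moreover have "polar n a (g x) b = \<psi> (g x)"
      using b(2) that by blast
    ultimately have "polar n a x b + polar n a R b = \<psi> x + \<psi> R"
      using \<psi> g by (simp add: polar_add_left)
    then have "polar n a x b = \<psi> x + c"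
      unfolding c_def by (metis add.assoc add.commute add_0_right bit_add_self)
    then show ?thesis
      using True b' by (simp add: add.assoc)
  next
    case False
    moreover have "polar n a (g x) b = \<psi> (g x)"
      using b(2) that by blast
    ultimately show ?thesis
      using b' g by simp
  qed
  moreover have "polar n a R b' = \<psi> R"
    using b' a1(2) by (simp add: c_def add.assoc)
  ultimately show ?thesis by auto
qed

lemma polar_fredholm_alternative:
  assumes Z: "gf2_subspace Z" and W: "gf2_subspace W" and L: "finite L" "L \<subseteq> W"
    and \<psi>: "\<forall>x y. \<psi> (x + y) = \<psi> x + \<psi> y"
  shows "(\<exists>b\<in>Z. \<forall>x\<in>L. polar n a x b = \<psi> x) \<or> (\<exists>r\<in>W. (\<forall>b\<in>Z. polar n a r b = 0) \<and> \<psi> r = 1)"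
  using L
proof (induction "card L" arbitrary: L rule: less_induct)
  case less
  show ?case
  proof (cases "L = {}")
    case True
    then show ?thesis using Z by (auto simp: gf2_subspace_def)
  next
    case False
    then obtain R where "R \<in> L" by blast
    then obtain L' where L: "L = insert R L'" "R \<notin> L'" by (meson mk_disjoint_insert)
    have L': "finite L'" "card L' < card L" "L' \<subseteq> W" and RW: "R \<in> W"
      using less.prems L by auto
    show ?thesis
    proof (cases "\<exists>a1\<in>Z. polar n a R a1 = 1")
      case False
      then show ?thesis
        using less.hyps[OF L'(2,1,3)] RW L(1) by (cases "\<psi> R") auto
    next
      case True
      then obtain a1 where a1: "a1 \<in> Z" "polar n a R a1 = 1" by blast
      \<comment> \<open>Gaussian elimination: clear the a1-coordinate of L' using R, and recurse.\<close>
      define g where "g x = (if polar n a x a1 = 1 then x + R else x)" for x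
      have "card (g ` L') < card L"
        using L' card_image_le le_less_trans by blast
      moreover have "g ` L' \<subseteq> W"
        using L'(3) RW W by (auto simp: g_def gf2_subspace_def)
      ultimately have "(\<exists>b\<in>Z. \<forall>x\<in>g ` L'. polar n a x b = \<psi> x) \<or> ?thesis"
        using less.hyps[of "g ` L'"] L'(1) by blast
      then show ?thesis
      proof
        assume "\<exists>b\<in>Z. \<forall>x\<in>g ` L'. polar n a x b = \<psi> x"
        then obtain b where "b \<in> Z" "\<forall>x\<in>L'. polar n a (g x) b = \<psi> (g x)"
          by auto
        then show ?thesis
          using polar_solution_extend[OF Z a1 \<psi> _ _ g_def] L(1) by blast
      qed
    qed
  qed
qed

lemma add_in_quadric_iff:
  assumes "P \<in> quadric n a" "R \<in> quadric n a"
  shows "P + R \<in> quadric n a \<longleftrightarrow> P \<noteq> R \<and> polar n a P R = 0"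
  using assms by (auto simp: quadric_iff qform_add bit_fun_add_eq_0_iff)

lemma adj_iff:
  assumes "P \<in> quadric n a" "R \<in> quadric n a"
  shows "adj n a P R \<longleftrightarrow> P \<noteq> R \<and> polar n a P R = 0"
  using assms add_in_quadric_iff[OF assms] by (auto simp: adj_def)

locale quadric_subspace =
  fixes n :: nat and a :: "nat \<Rightarrow> nat \<Rightarrow> bit" and A :: "(nat \<Rightarrow> bit) set" and s :: nat
  assumes proj_subspace_A: "proj_subspace n A s" and A_subset_quadric: "A \<subseteq> quadric n a"
begin

abbreviation type3 :: "(nat \<Rightarrow> bit) set" where
  "type3 \<equiv> Ys n a A - A"

lemma totally_singular_subspace_A: "totally_singular_subspace n a (insert 0 A)"
  using proj_subspace_insert_zero[OF proj_subspace_A A_subset_quadric] by simp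

lemma polar_A: "b \<in> A \<Longrightarrow> c \<in> A \<Longrightarrow> polar n a b c = 0"
  using totally_singular_subspace_A
  by (auto simp: totally_singular_subspace_def totally_singular_def)

lemma Xs_iff: "X \<in> Xs n a A \<longleftrightarrow> X \<in> quadric n a \<and> X \<notin> A \<and> (\<forall>b\<in>A. polar n a b X = 0)"
proof -
  have "span_pt A X \<subseteq> quadric n a \<longleftrightarrow> (\<forall>b\<in>A. polar n a b X = 0)"
    if "X \<in> quadric n a" "X \<notin> A"
    using that A_subset_quadric add_in_quadric_iff[of _ n a X] by (auto simp: span_pt_def)
  then show ?thesis
    by (auto simp: Xs_def)
qed

lemma type3_iff: "X \<in> type3 \<longleftrightarrow> X \<in> quadric n a \<and> X \<notin> A \<and> (\<exists>b\<in>A. polar n a b X = 1)"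
  by (auto simp: Ys_def Xs_iff)

lemma polar_A_Xs: "b \<in> A \<Longrightarrow> y \<in> A \<union> Xs n a A \<Longrightarrow> polar n a b y = 0"
  by (auto simp: Xs_iff polar_A)

lemma Xs_add_A: "X \<in> Xs n a A \<Longrightarrow> b \<in> A \<Longrightarrow> X + b \<in> Xs n a A"
proof -
  assume X: "X \<in> Xs n a A" and b: "b \<in> A"
  have "X + b \<notin> A"
  proof
    assume "X + b \<in> A"
    then have "X + b + b \<in> insert 0 A"
      using totally_singular_subspace_A b
      unfolding totally_singular_subspace_def gf2_subspace_def by blast
    then show False
      using X by (simp only: bit_fun_add_cancel(2)) (auto simp: Xs_iff quadric_iff)
  qed
  moreover have "X + b \<in> quadric n a"
  proof -
    have "X \<in> quadric n a" "b \<in> quadric n a" "X \<noteq> b" "polar n a X b = 0"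
      using X b A_subset_quadric by (auto simp: Xs_iff) (metis polar_commute)
    then show ?thesis
      by (simp add: add_in_quadric_iff)
  qed
  ultimately show ?thesis
    using X b by (auto simp: Xs_iff polar_add_right polar_A)
qed

lemma finite_Xs: "finite (Xs n a A)"
  by (rule finite_quadric_subset) (auto simp: Xs_def)

lemma switched_iff:
  assumes R: "R \<in> quadric n a" and nonempty: "Xs n a A \<noteq> {}"
  shows "switched n a A R \<longleftrightarrow> R \<in> type3"
proof
  assume sw: "switched n a A R"
  have "R \<notin> A"
  proof
    assume "R \<in> A"
    then have "{X \<in> Xs n a A. adj n a R X} = Xs n a A"
      using R by (auto simp: adj_iff Xs_iff)
    then show False
      using sw nonempty finite_Xs by (simp add: switched_def)
  qed
  then show "R \<in> type3"
    using sw by (simp add: switched_def)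
next
  assume R3: "R \<in> type3"
  then obtain b where b: "b \<in> A" "polar n a b R = 1"
    using type3_iff by blast
  define N0 where "N0 = {X \<in> Xs n a A. polar n a R X = 0}"
  have "N0 = {X \<in> Xs n a A. adj n a R X}"
    using R R3 by (auto simp: N0_def adj_iff Ys_def Xs_iff)
  moreover have "Xs n a A = N0 \<union> (+) b ` N0" and "N0 \<inter> (+) b ` N0 = {}"
  proof -
    have shift: "polar n a R (b + X) = 1 + polar n a R X" for X
      using b(2) by (simp add: polar_add_right polar_commute[of n a R b])
    have Xb: "b + X \<in> Xs n a A" if "X \<in> Xs n a A" for X
      using Xs_add_A[OF that b(1)] by (simp add: add.commute)
    have "X \<in> N0 \<union> (+) b ` N0" if "X \<in> Xs n a A" for X
    proof (cases "polar n a R X = 0")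
      case False
      then have "b + X \<in> N0"
        using that Xb shift by (simp add: N0_def)
      then show ?thesis
        using image_eqI[of X "(+) b" "b + X" N0] by simp
    qed (use that in \<open>simp add: N0_def\<close>)
    then show "Xs n a A = N0 \<union> (+) b ` N0"
      using Xb by (auto simp: N0_def)
    show "N0 \<inter> (+) b ` N0 = {}"
      using shift by (auto simp: N0_def)
  qed
  moreover have "finite N0"
    using finite_Xs by (simp add: N0_def)
  ultimately show "switched n a A R"
    using R R3 by (simp add: switched_def card_Un_disjoint card_image)
qed

lemma adj_s_iff:
  assumes "P \<in> quadric n a" "R \<in> quadric n a"
  shows "adj_s n a A P R \<longleftrightarrow> P \<noteq> R \<and>
    polar n a P R = of_bool (P \<in> type3 \<and> R \<in> Xs n a A \<or> R \<in> type3 \<and> P \<in> Xs n a A)"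
proof -
  have "(switched n a A P \<and> R \<in> Xs n a A \<or> switched n a A R \<and> P \<in> Xs n a A) \<longleftrightarrow>
      (P \<in> type3 \<and> R \<in> Xs n a A \<or> R \<in> type3 \<and> P \<in> Xs n a A)"
    using switched_iff[OF assms(1)] switched_iff[OF assms(2)] by blast
  then show ?thesis
    using assms by (auto simp: adj_s_def adj_iff)
qed

lemma clique_s_polar:
  assumes "clique_s n a A C" "x \<in> C" "y \<in> C"
  shows "polar n a x y = of_bool (x \<in> type3 \<and> y \<in> Xs n a A \<or> y \<in> type3 \<and> x \<in> Xs n a A)"
proof (cases "x = y")
  case True
  then show ?thesis by (auto simp: Ys_def)
next
  case False
  then have "x \<in> quadric n a" "y \<in> quadric n a" "adj_s n a A x y"
    using assms by (auto simp: clique_s_def)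
  then show ?thesis
    using adj_s_iff by blast
qed

lemma clique_s_exists: "\<exists>C. clique_s n a A C \<and> card C = 2 ^ (proj_index n a + 1) - 1"
proof -
  obtain M where M: "proj_subspace n M (proj_index n a)" "M \<subseteq> quadric n a"
    using proj_index_attained[OF proj_subspace_A A_subset_quadric] .
  have "totally_singular n a A"
    using totally_singular_subspace_A
    by (auto simp: totally_singular_subspace_def totally_singular_def)
  then obtain M' where M': "totally_singular_subspace n a M'" "A \<subseteq> M'" "card (insert 0 M) \<le> card M'"
    using totally_singular_subspace_extend[OF proj_subspace_insert_zero(1)[OF M]] by blast
  define K where "K = M' - {0}"
  have K_quadric: "K \<subseteq> quadric n a" and K_orth: "\<forall>x\<in>K. \<forall>y\<in>K. polar n a x y = 0"
    using M'(1) by (auto simp: K_def totally_singular_subspace_def totally_singular_def quadric_iff)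
  have "x \<notin> type3" if "x \<in> K" for x
  proof
    assume "x \<in> type3"
    then obtain b where "b \<in> A" "polar n a b x = 1"
      using type3_iff by blast
    then show False
      using M' that by (auto simp: K_def totally_singular_subspace_def totally_singular_def)
  qed
  then have "clique_s n a A K"
    using K_quadric K_orth by (auto simp: clique_s_def adj_s_iff subset_iff)
  moreover have "card K = 2 ^ (proj_index n a + 1) - 1"
  proof (rule antisym)
    show "card K \<le> 2 ^ (proj_index n a + 1) - 1"
      using K_quadric K_orth by (rule card_totally_singular_le)
    have "card K = card M' - 1"
      using M'(1) by (simp add: K_def totally_singular_subspace_def gf2_subspace_def)
    then show "2 ^ (proj_index n a + 1) - 1 \<le> card K"
      using M'(3) proj_subspace_insert_zero(2)[OF M] by simp
  qed
  ultimately show ?thesis by blast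
qed

lemma clique_s_subset_quadric: "clique_s n a A C \<Longrightarrow> C \<subseteq> quadric n a"
  by (simp add: clique_s_def)

lemma card_clique_s_le_translating_Xs:
  assumes C: "clique_s n a A C" and b: "b \<in> A" "\<forall>x\<in>C \<inter> type3. polar n a x b = 1"
  shows "card C \<le> 2 ^ (proj_index n a + 1) - 1"
proof (rule card_le_by_partial_translation[where T = "C \<inter> Xs n a A" and v = b])
  have C_cases: "y \<in> A \<or> y \<in> type3" if "y \<in> C - Xs n a A" for y
    using C that by (auto simp: clique_s_def Ys_def)
  show "C \<subseteq> quadric n a"
    using C by (rule clique_s_subset_quadric)
  show "b \<in> vecs n" "qform n a b = 0"
    using b(1) A_subset_quadric by (auto simp: quadric_iff)
  show "\<forall>x\<in>C \<inter> Xs n a A. polar n a b x = 0"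
    using b(1) by (auto simp: Xs_iff)
  show "\<forall>x\<in>C \<inter> Xs n a A. \<forall>y\<in>C - C \<inter> Xs n a A. polar n a x y = polar n a b y"
    using C_cases clique_s_polar[OF C] clique_s_subset_quadric[OF C] b polar_A
    by (auto simp: Ys_def polar_commute[of n a b])
  show "\<forall>x\<in>C \<inter> Xs n a A. \<forall>y\<in>C \<inter> Xs n a A. polar n a x y = 0"
    "\<forall>x\<in>C - C \<inter> Xs n a A. \<forall>y\<in>C - C \<inter> Xs n a A. polar n a x y = 0"
    using clique_s_polar[OF C] by (auto simp: Ys_def)
  show "\<forall>x\<in>C \<inter> Xs n a A. x \<noteq> b \<and> x + b \<notin> C - C \<inter> Xs n a A"
    using b(1) Xs_add_A by (auto simp: Xs_iff)
qed auto

lemma card_clique_s_le_translating_type3: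
  assumes C: "clique_s n a A C"
    and r: "r \<in> vecs n" "qform n a r = 0" "\<forall>b\<in>A. polar n a b r = 0"
      "\<forall>y\<in>C \<inter> type3. polar n a r y = 0" "\<forall>y\<in>C \<inter> Xs n a A. polar n a r y = 1"
  shows "card C \<le> 2 ^ (proj_index n a + 1) - 1"
proof (rule card_le_by_partial_translation[where T = "C \<inter> type3" and v = r])
  have C_cases: "y \<in> A \<or> y \<in> Xs n a A" if "y \<in> C - type3" for y
    using C that by (auto simp: clique_s_def Ys_def)
  have r_A: "polar n a r y = 0" if "y \<in> A" for y
    using r(3) that by (metis polar_commute)
  show "C \<subseteq> quadric n a"
    using C by (rule clique_s_subset_quadric)
  show "\<forall>x\<in>C \<inter> type3. \<forall>y\<in>C - C \<inter> type3. polar n a x y = polar n a r y"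
    using C_cases clique_s_polar[OF C] clique_s_subset_quadric[OF C] r(5) r_A
    by (auto simp: Ys_def)
  show "\<forall>x\<in>C \<inter> type3. \<forall>y\<in>C \<inter> type3. polar n a x y = 0"
    "\<forall>x\<in>C - C \<inter> type3. \<forall>y\<in>C - C \<inter> type3. polar n a x y = 0"
    using clique_s_polar[OF C] by (auto simp: Ys_def)
  show "\<forall>x\<in>C \<inter> type3. x \<noteq> r \<and> x + r \<notin> C - C \<inter> type3"
  proof (intro ballI conjI notI)
    fix x assume x: "x \<in> C \<inter> type3"
    then obtain b where b: "b \<in> A" "polar n a b x = 1"
      using type3_iff by blast
    show "x = r \<Longrightarrow> False"
      using b r(3) by auto
    assume "x + r \<in> C - C \<inter> type3"
    then have "polar n a b (x + r) = 0"
      using C_cases polar_A_Xs[OF b(1)] by blast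
    then show False
      using b r(3) by (simp add: polar_add_right)
  qed
qed (use r in auto)

lemma clique_s_translation_vector:
  assumes C: "clique_s n a A C" and X0: "X0 \<in> C \<inter> Xs n a A" and C3: "C \<inter> type3 \<noteq> {}"
  shows "(\<exists>b\<in>A. \<forall>x\<in>C \<inter> type3. polar n a x b = 1) \<or>
    (\<exists>r\<in>vecs n. qform n a r = 0 \<and> (\<forall>b\<in>A. polar n a b r = 0) \<and>
      (\<forall>y\<in>C \<inter> type3. polar n a r y = 0) \<and> (\<forall>y\<in>C \<inter> Xs n a A. polar n a r y = 1))"
proof -
  have C3_X0: "polar n a x X0 = 1" if "x \<in> C \<inter> type3" for x
    using clique_s_polar[OF C] X0 that by auto
  have "totally_singular n a (C \<inter> type3)"
    using clique_s_subset_quadric[OF C] clique_s_polar[OF C]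
    by (auto simp: totally_singular_def quadric_iff Ys_def)
  then obtain W where W: "totally_singular_subspace n a W" "C \<inter> type3 \<subseteq> W"
      "\<forall>y. (\<forall>d\<in>C \<inter> type3. polar n a d y = 0) \<longrightarrow> (\<forall>w\<in>W. polar n a w y = 0)"
    using totally_singular_span by blast
  have "finite (C \<inter> type3)"
    using finite_quadric_subset[OF clique_s_subset_quadric[OF C]] by simp
  then have "(\<exists>b\<in>insert 0 A. \<forall>x\<in>C \<inter> type3. polar n a x b = polar n a x X0) \<or>
      (\<exists>r\<in>W. (\<forall>b\<in>insert 0 A. polar n a r b = 0) \<and> polar n a r X0 = 1)"
    using totally_singular_subspace_A W(1,2)
    by (intro polar_fredholm_alternative) (auto simp: totally_singular_subspace_def polar_add_left)
  then show ?thesis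
  proof (elim disjE bexE conjE)
    fix b assume "b \<in> insert 0 A" "\<forall>x\<in>C \<inter> type3. polar n a x b = polar n a x X0"
    then show ?thesis
      using C3 C3_X0 by force
  next
    fix r assume r: "r \<in> W" "\<forall>b\<in>insert 0 A. polar n a r b = 0" "polar n a r X0 = 1"
    have "polar n a r y = 1" if "y \<in> C \<inter> Xs n a A" for y
    proof -
      \<comment> \<open>X0 + y is orthogonal to C \<inter> type3, hence to its span W.\<close>
      have "\<forall>d\<in>C \<inter> type3. polar n a d (X0 + y) = 0"
        using C3_X0 clique_s_polar[OF C] that by (auto simp: polar_add_right Ys_def)
      then have "polar n a r (X0 + y) = 0"
        using W(3) r(1) by blast
      then show ?thesis
        using r(3) by (simp add: polar_add_right) (metis add_0_right bit_add_self bit_not_zero_iff)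
    qed
    moreover have "polar n a r y = 0" if "y \<in> C \<inter> type3" for y
      using W(1,2) r(1) that by (auto simp: totally_singular_subspace_def totally_singular_def)
    moreover have "r \<in> vecs n" "qform n a r = 0" "\<forall>b\<in>A. polar n a b r = 0"
      using W(1) r(1,2) by (auto simp: totally_singular_subspace_def totally_singular_def polar_commute)
    ultimately show ?thesis
      by blast
  qed
qed

lemma card_clique_s_le:
  assumes C: "clique_s n a A C"
  shows "card C \<le> 2 ^ (proj_index n a + 1) - 1"
proof (cases "C \<inter> type3 = {} \<or> C \<inter> Xs n a A = {}")
  case True
  then have "\<forall>x\<in>C. \<forall>y\<in>C. polar n a x y = 0"
    using clique_s_polar[OF C] by auto
  then show ?thesis
    using clique_s_subset_quadric[OF C] by (rule card_totally_singular_le[rotated])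
next
  case False
  then obtain X0 where "X0 \<in> C \<inter> Xs n a A" by blast
  then show ?thesis
    using clique_s_translation_vector[OF C] False
      card_clique_s_le_translating_Xs[OF C] card_clique_s_le_translating_type3[OF C]
    by blast
qed

end

theorem lemma5p5:
  fixes n g s :: nat and a :: "nat \<Rightarrow> nat \<Rightarrow> bit" and A :: "(nat \<Rightarrow> bit) set"
  assumes "nonsingular n a"
    and "g = proj_index n a" and "g \<ge> 1"
    and "s < g"
    and "proj_subspace n A s" and "A \<subseteq> quadric n a"
  shows "(\<exists>C. clique_s n a A C \<and> card C = 2^(g+1) - 1) \<and>
         (\<forall>C. clique_s n a A C \<longrightarrow> card C \<le> 2^(g+1) - 1)"
proof -
  interpret quadric_subspace n a A s
    using assms(5,6) by unfold_locales
  show ?thesis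
    using clique_s_exists card_clique_s_le unfolding assms(2) by blast
qed

end
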